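(* Under the standing assumptions, let $\{x_i\}_{i=1}^N$ be a solution of the delayed Hegselmann–Krause system. Then for every $n\in\mathbb{N}_0$ and all $i,j=1,\dots,N$, $$|x_i(s)-x_j(t)|\le D_n\qquad\text{for all } s,t\ge n\bar\tau-\bar\tau.$$ In particular $|x_i(s)-x_j(t)|\le D_0$ for all $s,t\ge-\bar\tau$, and $D_{n+1}\le D_n$ for all $n\in\mathbb{N}_0$.
   Context: Standing assumptions: $N\ge 2$, $d\ge 1$, $\bar\tau>0$; $\tau:[0,\infty)\to[0,\bar\tau]$ continuous; $\psi:\mathbb{R}^d\times\mathbb{R}^d\to\mathbb{R}$ continuous, bounded and strictly positive, $K:=\|\psi\|_\infty$; initial data $x_i^0:[-\bar\tau,0]\to\mathbb{R}^d$ continuous. The delayed Hegselmann–Krause system is $$\frac{d}{dt}x_i(t)=\frac{1}{N-1}\sum_{j\ne i}\psi\big(x_i(t),x_j(t-\tau(t))\big)\big(x_j(t-\tau(t))-x_i(t)\big),\quad t>0,$$ with $x_i=x_i^0$ on $[-\bar\tau,0]$; a solution means continuous $x_i:[-\bar\tau,\infty)\to\mathbb{R}^d$, differentiable on $(0,\infty)$, satisfying this. $\mathbb{N}_0=\{0,1,2,\dots\}$. For $n\in\mathbb{N}_0$, $D_n:=\max_{i,j=1,\dots,N}\max_{s,t\in[n\bar\tau-\bar\tau,\,n\bar\tau]}|x_i(s)-x_j(t)|$. *)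

theory Defs
  imports "HOL-Analysis.Analysis"
begin

definition dHK_solution ::
  "nat \<Rightarrow> real \<Rightarrow> (real \<Rightarrow> real) \<Rightarrow> ('a::euclidean_space \<Rightarrow> 'a \<Rightarrow> real)
   \<Rightarrow> (nat \<Rightarrow> real \<Rightarrow> 'a) \<Rightarrow> (nat \<Rightarrow> real \<Rightarrow> 'a) \<Rightarrow> bool" where
  "dHK_solution N taubar tau psi x0 x \<longleftrightarrow>
     (\<forall>i\<in>{1..N}. continuous_on {-taubar..} (x i)
        \<and> (\<forall>t\<in>{-taubar..0}. x i t = x0 i t)
        \<and> (\<forall>t>0. (x i has_vector_derivative
              ((1 / (real N - 1)) *\<^sub>R
                (\<Sum>j\<in>{1..N}-{i}. psi (x i t) (x j (t - tau t)) *\<^sub>R (x j (t - tau t) - x i t))))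
              (at t)))"

definition diamD ::
  "nat \<Rightarrow> real \<Rightarrow> (nat \<Rightarrow> real \<Rightarrow> 'a::euclidean_space) \<Rightarrow> nat \<Rightarrow> real" where
  "diamD N taubar x n =
     (SUP p\<in>{1..N} \<times> {1..N} \<times> {real n * taubar - taubar .. real n * taubar} \<times> {real n * taubar - taubar .. real n * taubar}.
        (case p of (i, j, s, t) \<Rightarrow> norm (x i s - x j t)))"

end

theory Submission
  imports Defs
begin

text \<open>Fix a direction v and suppose every agent stays in the half-space v \<bullet> z \<le> M during the
  window [n\<tau> - \<tau>, n\<tau>]. At the first time an agent would leave it, it is the maximal one among
  all current and delayed positions, so every summand of its velocity points back into the
  half-space: the half-space is forward invariant. Applying this to the half-spaces orthogonal
  to w = x i s - x j t that contain the window (their width is at most |w| D n by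
  Cauchy-Schwarz) gives |w|^2 \<le> |w| D n.\<close>

lemma first_crossing_time:
  fixes g :: "'i \<Rightarrow> real \<Rightarrow> real"
  assumes "finite K"
    and cont: "\<And>k. k \<in> K \<Longrightarrow> continuous_on {c..} (g k)"
    and start: "\<And>k. k \<in> K \<Longrightarrow> g k c < 0"
    and "k \<in> K" "c \<le> t" "0 \<le> g k t"
  obtains i t0 where "i \<in> K" "c < t0" "g i t0 = 0"
    and "\<And>k r. k \<in> K \<Longrightarrow> c \<le> r \<Longrightarrow> r < t0 \<Longrightarrow> g k r < 0"
    and "\<And>k. k \<in> K \<Longrightarrow> g k t0 \<le> 0"
proof -
  define S where "S = {t. c \<le> t \<and> (\<exists>k\<in>K. 0 \<le> g k t)}"
  have "S = (\<Union>k\<in>K. {c..} \<inter> g k -` {0..})"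
    by (auto simp: S_def)
  moreover have "closed ({c..} \<inter> g k -` {0..})" if "k \<in> K" for k
    by (rule continuous_closed_preimage[OF cont[OF that]]) auto
  ultimately have "closed S"
    using \<open>finite K\<close> by (metis closed_UN)
  moreover have "t \<in> S"
    using assms(4-6) by (auto simp: S_def)
  moreover have "bdd_below S"
    by (rule bdd_belowI[of _ c]) (auto simp: S_def)
  ultimately have "Inf S \<in> S"
    using closed_contains_Inf by blast
  then obtain i where i: "i \<in> K" "c \<le> Inf S" "0 \<le> g i (Inf S)"
    by (auto simp: S_def)
  have before: "g k r < 0" if "k \<in> K" "c \<le> r" "r < Inf S" for k r
  proof (rule ccontr)
    assume "\<not> g k r < 0"
    then have "r \<in> S"
      using that unfolding S_def by (auto simp: not_less intro!: bexI[of _ k])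
    then show False
      using cInf_lower[OF _ \<open>bdd_below S\<close>] \<open>r < Inf S\<close> by fastforce
  qed
  have "c < Inf S"
    using i start[OF i(1)] by (cases "c = Inf S") auto
  have at_crossing: "g k (Inf S) \<le> 0" if "k \<in> K" for k
  proof -
    have "continuous_on (closure {c..<Inf S}) (g k)"
      using \<open>c < Inf S\<close> by (auto intro: continuous_on_subset[OF cont[OF that]])
    then show ?thesis
      using continuous_le_on_closure[of "{c..<Inf S}" "g k" "Inf S" 0] \<open>c < Inf S\<close>
        before[OF that] by (auto simp: less_imp_le)
  qed
  show thesis
    using that[OF i(1) \<open>c < Inf S\<close> _ before at_crossing] i at_crossing[OF i(1)] by auto
qed

lemma delayed_max_principle:
  fixes y :: "'i \<Rightarrow> real \<Rightarrow> real"
  assumes "finite K" "a \<le> c"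
    and cont: "\<And>k. k \<in> K \<Longrightarrow> continuous_on {a..} (y k)"
    and init: "\<And>k r. k \<in> K \<Longrightarrow> a \<le> r \<Longrightarrow> r \<le> c \<Longrightarrow> y k r \<le> M"
    and deriv: "\<And>k t. k \<in> K \<Longrightarrow> c < t \<Longrightarrow>
      (\<And>j r. j \<in> K \<Longrightarrow> a \<le> r \<Longrightarrow> r \<le> t \<Longrightarrow> y j r \<le> y k t) \<Longrightarrow>
      \<exists>D\<le>0. (y k has_real_derivative D) (at t)"
    and "k \<in> K" "a \<le> t"
  shows "y k t \<le> M"
proof -
  \<comment> \<open>The barrier is strictly increasing, so at a first touching time its slope exceeds the
    nonpositive slope of the touching y i.\<close>
  have barrier: "y k t < M + e * exp (t - c)" if "e > 0" "k \<in> K" "a \<le> t" for e k t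
  proof (rule ccontr)
    define b where "b t = M + e * exp (t - c)" for t
    have b_mono: "b r \<le> b s" if "r \<le> s" for r s
      using that \<open>e > 0\<close> by (simp add: b_def)
    have below_init: "y k r < b r" if "k \<in> K" "a \<le> r" "r \<le> c" for k r
      using init[OF that] mult_pos_pos[OF \<open>e > 0\<close> exp_gt_zero[of "r - c"]]
      by (simp add: b_def)
    assume "\<not> y k t < M + e * exp (t - c)"
    then have "0 \<le> y k t - b t"
      by (simp add: b_def)
    have "c \<le> t"
    proof (rule ccontr)
      assume "\<not> c \<le> t"
      then show False
        using below_init[OF \<open>k \<in> K\<close> \<open>a \<le> t\<close>] \<open>0 \<le> y k t - b t\<close> by simp
    qed
    have cont_gap: "continuous_on {c..} (\<lambda>t. y k t - b t)" if "k \<in> K" for k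
      using continuous_on_subset[OF cont[OF that], of "{c..}"] \<open>a \<le> c\<close>
      by (auto simp: b_def intro!: continuous_intros)
    have start_gap: "y k c - b c < 0" if "k \<in> K" for k
      using below_init[OF that \<open>a \<le> c\<close> order_refl] by simp
    obtain i t0 where i: "i \<in> K" "c < t0" "y i t0 - b t0 = 0"
      and before: "\<And>k r. k \<in> K \<Longrightarrow> c \<le> r \<Longrightarrow> r < t0 \<Longrightarrow> y k r - b r < 0"
      and at_t0: "\<And>k. k \<in> K \<Longrightarrow> y k t0 - b t0 \<le> 0"
      by (rule first_crossing_time[where g="\<lambda>k t. y k t - b t", OF \<open>finite K\<close> cont_gap start_gap
        \<open>k \<in> K\<close> \<open>c \<le> t\<close> \<open>0 \<le> y k t - b t\<close>]) auto
    have max_at_t0: "y j r \<le> y i t0" if "j \<in> K" "a \<le> r" "r \<le> t0" for j r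
    proof -
      consider "r \<le> c" | "c \<le> r" "r < t0" | "r = t0"
        using \<open>r \<le> t0\<close> by linarith
      then show ?thesis
      proof cases
        case 1
        then show ?thesis
          using below_init[OF that(1,2) 1] b_mono[OF \<open>r \<le> t0\<close>] i(3) by simp
      next
        case 2
        then show ?thesis
          using before[OF that(1) 2] b_mono[OF \<open>r \<le> t0\<close>] i(3) by simp
      next
        case 3
        then show ?thesis
          using at_t0[OF that(1)] i(3) by simp
      qed
    qed
    obtain D where "D \<le> 0" "(y i has_real_derivative D) (at t0)"
      using deriv[OF i(1,2) max_at_t0] by blast
    then have "((\<lambda>t. y i t - b t) has_real_derivative D - e * exp (t0 - c)) (at t0)"
      unfolding b_def by (auto intro!: derivative_eq_intros)
    moreover have "D - e * exp (t0 - c) < 0"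
      using \<open>D \<le> 0\<close> mult_pos_pos[OF \<open>e > 0\<close> exp_gt_zero[of "t0 - c"]] by linarith
    ultimately have "\<exists>d>0. \<forall>h>0. h < d \<longrightarrow> y i t0 - b t0 < y i (t0 - h) - b (t0 - h)"
      by (rule DERIV_neg_dec_left)
    then obtain d where "d > 0"
      and decreasing: "\<And>h. 0 < h \<Longrightarrow> h < d \<Longrightarrow> y i t0 - b t0 < y i (t0 - h) - b (t0 - h)"
      by blast
    define h where "h = min (d / 2) (t0 - c)"
    have "0 < h" "h < d" "c \<le> t0 - h"
      using \<open>d > 0\<close> \<open>c < t0\<close> by (auto simp: h_def)
    then show False
      using decreasing[of h] before[OF i(1), of "t0 - h"] i(3) by simp
  qed
  show ?thesis
  proof (rule ccontr)
    assume "\<not> y k t \<le> M"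
    define e where "e = (y k t - M) / (2 * exp (t - c))"
    have "e > 0" and e_exp: "e * exp (t - c) = (y k t - M) / 2"
      using \<open>\<not> y k t \<le> M\<close> by (auto simp: e_def)
    have "y k t < M + (y k t - M) / 2"
      using barrier[OF \<open>e > 0\<close> \<open>k \<in> K\<close> \<open>a \<le> t\<close>] unfolding e_exp .
    then show False
      using \<open>\<not> y k t \<le> M\<close> by (simp add: field_simps)
  qed
qed

definition dHK_field ::
  "nat \<Rightarrow> (real \<Rightarrow> real) \<Rightarrow> ('a::euclidean_space \<Rightarrow> 'a \<Rightarrow> real) \<Rightarrow> (nat \<Rightarrow> real \<Rightarrow> 'a)
   \<Rightarrow> nat \<Rightarrow> real \<Rightarrow> 'a" where
  "dHK_field N tau psi x i t = (1 / (real N - 1)) *\<^sub>R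
     (\<Sum>j\<in>{1..N}-{i}. psi (x i t) (x j (t - tau t)) *\<^sub>R (x j (t - tau t) - x i t))"

lemma dHK_solution_continuous:
  "dHK_solution N taubar tau psi x0 x \<Longrightarrow> i \<in> {1..N} \<Longrightarrow> continuous_on {-taubar..} (x i)"
  unfolding dHK_solution_def by blast

lemma dHK_solution_derivative:
  "dHK_solution N taubar tau psi x0 x \<Longrightarrow> i \<in> {1..N} \<Longrightarrow> 0 < t \<Longrightarrow>
    (x i has_vector_derivative dHK_field N tau psi x i t) (at t)"
  unfolding dHK_solution_def dHK_field_def by blast

lemma inner_dHK_field:
  "v \<bullet> dHK_field N tau psi x i t = (1 / (real N - 1)) *
     (\<Sum>j\<in>{1..N}-{i}. psi (x i t) (x j (t - tau t)) * (v \<bullet> x j (t - tau t) - v \<bullet> x i t))"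
  by (simp add: dHK_field_def inner_sum_right inner_diff_right)

abbreviation delay_window :: "real \<Rightarrow> nat \<Rightarrow> real set" where
  "delay_window taubar n \<equiv> {real n * taubar - taubar .. real n * taubar}"

lemma dHK_halfspace_forward_invariant:
  fixes x :: "nat \<Rightarrow> real \<Rightarrow> 'a::euclidean_space"
  assumes "0 \<le> taubar"
    and tau: "\<And>t. t \<ge> 0 \<Longrightarrow> 0 \<le> tau t \<and> tau t \<le> taubar"
    and psi_nonneg: "\<And>u w. 0 \<le> psi u w"
    and sol: "dHK_solution N taubar tau psi x0 x"
    and init: "\<And>k r. k \<in> {1..N} \<Longrightarrow> r \<in> delay_window taubar n \<Longrightarrow> v \<bullet> x k r \<le> M"
    and "k \<in> {1..N}" "real n * taubar - taubar \<le> t"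
  shows "v \<bullet> x k t \<le> M"
proof -
  define a c where "a = real n * taubar - taubar" and "c = real n * taubar"
  have "0 \<le> c" "a \<le> c" "-taubar \<le> a"
    using \<open>0 \<le> taubar\<close> by (simp_all add: a_def c_def)
  have cont: "continuous_on {a..} (\<lambda>t. v \<bullet> x k t)" if "k \<in> {1..N}" for k
  proof -
    have "continuous_on {-taubar..} (x k)"
      using sol that by (rule dHK_solution_continuous)
    then have "continuous_on {a..} (x k)"
      by (rule continuous_on_subset) (use \<open>-taubar \<le> a\<close> in auto)
    then show ?thesis
      by (intro continuous_intros)
  qed
  have deriv: "\<exists>D\<le>0. ((\<lambda>t. v \<bullet> x k t) has_real_derivative D) (at t)"
    if k: "k \<in> {1..N}" and "c < t"
      and below: "\<And>j r. j \<in> {1..N} \<Longrightarrow> a \<le> r \<Longrightarrow> r \<le> t \<Longrightarrow> v \<bullet> x j r \<le> v \<bullet> x k t" for k t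
  proof -
    define s where "s = t - tau t"
    define D where "D = v \<bullet> dHK_field N tau psi x k t"
    have "t > 0"
      using \<open>0 \<le> c\<close> \<open>c < t\<close> by linarith
    have "a \<le> s" "s \<le> t"
      using tau[of t] \<open>t > 0\<close> \<open>c < t\<close> by (simp_all add: s_def a_def c_def)
    have "((\<lambda>t. v \<bullet> x k t) has_real_derivative D) (at t)"
      unfolding D_def has_real_derivative_iff_has_vector_derivative
      by (rule bounded_linear.has_vector_derivative[OF bounded_linear_inner_right
            dHK_solution_derivative[OF sol k \<open>t > 0\<close>]])
    moreover have "D \<le> 0"
    proof -
      have "0 \<le> 1 / (real N - 1)" \<comment> \<open>for N = 1 the factor is 1 / 0 = 0\<close>
        using k by simp
      moreover have "(\<Sum>j\<in>{1..N}-{k}. psi (x k t) (x j s) * (v \<bullet> x j s - v \<bullet> x k t)) \<le> 0"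
        using below[OF _ \<open>a \<le> s\<close> \<open>s \<le> t\<close>] psi_nonneg
        by (intro sum_nonpos mult_nonneg_nonpos) auto
      ultimately show ?thesis
        unfolding D_def inner_dHK_field s_def[symmetric] by (rule mult_nonneg_nonpos)
    qed
    ultimately show ?thesis
      by blast
  qed
  have "a \<le> t"
    using \<open>real n * taubar - taubar \<le> t\<close> by (simp add: a_def)
  have init': "v \<bullet> x k r \<le> M" if "k \<in> {1..N}" "a \<le> r" "r \<le> c" for k r
    using init that by (simp add: a_def c_def)
  show ?thesis
    by (rule delayed_max_principle[where y="\<lambda>k t. v \<bullet> x k t", OF finite_atLeastAtMost
          \<open>a \<le> c\<close> cont init' deriv \<open>k \<in> {1..N}\<close> \<open>a \<le> t\<close>])
qed

lemma norm_le_diamD: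
  fixes x :: "nat \<Rightarrow> real \<Rightarrow> 'a::euclidean_space"
  assumes "0 \<le> taubar"
    and cont: "\<And>i. i \<in> {1..N} \<Longrightarrow> continuous_on {-taubar..} (x i)"
    and "i \<in> {1..N}" "j \<in> {1..N}" "s \<in> delay_window taubar n" "t \<in> delay_window taubar n"
  shows "norm (x i s - x j t) \<le> diamD N taubar x n"
proof -
  define W where "W = delay_window taubar n"
  define f where "f = (\<lambda>(i, j, s, t). norm (x i s - x j t))"
  have "W \<subseteq> {-taubar..}"
    using \<open>0 \<le> taubar\<close> by (auto simp: W_def)
  then have "compact (x i ` W)" if "i \<in> {1..N}" for i
    by (intro compact_continuous_image continuous_on_subset[OF cont[OF that]]) (simp_all add: W_def)
  then have "bounded (\<Union>i\<in>{1..N}. x i ` W)"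
    by (simp add: bounded_UN compact_imp_bounded)
  then obtain B where B: "\<And>i s. i \<in> {1..N} \<Longrightarrow> s \<in> W \<Longrightarrow> norm (x i s) \<le> B"
    unfolding bounded_iff by blast
  have "bdd_above (f ` ({1..N} \<times> {1..N} \<times> W \<times> W))"
  proof (rule bdd_aboveI2)
    fix p assume "p \<in> {1..N} \<times> {1..N} \<times> W \<times> W"
    then obtain i j s t where "p = (i, j, s, t)" "i \<in> {1..N}" "j \<in> {1..N}" "s \<in> W" "t \<in> W"
      by auto
    then show "f p \<le> B + B"
      using norm_triangle_ineq4[of "x i s" "x j t"] B[of i s] B[of j t] by (simp add: f_def)
  qed
  then show ?thesis
    using cSUP_upper[of "(i, j, s, t)" "{1..N} \<times> {1..N} \<times> W \<times> W" f] assms(3-6)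
    by (simp add: diamD_def f_def W_def)
qed

lemma diamD_le:
  fixes x :: "nat \<Rightarrow> real \<Rightarrow> 'a::euclidean_space"
  assumes "1 \<le> N" "0 \<le> taubar"
    and "\<And>i j s t. i \<in> {1..N} \<Longrightarrow> j \<in> {1..N} \<Longrightarrow>
      s \<in> delay_window taubar n \<Longrightarrow> t \<in> delay_window taubar n \<Longrightarrow> norm (x i s - x j t) \<le> B"
  shows "diamD N taubar x n \<le> B"
  unfolding diamD_def
  by (rule cSUP_least) (use assms in auto)

lemma dHK_dist_le_diamD:
  fixes x :: "nat \<Rightarrow> real \<Rightarrow> 'a::euclidean_space"
  assumes "0 \<le> taubar"
    and tau: "\<And>t. t \<ge> 0 \<Longrightarrow> 0 \<le> tau t \<and> tau t \<le> taubar"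
    and psi_nonneg: "\<And>u w. 0 \<le> psi u w"
    and sol: "dHK_solution N taubar tau psi x0 x"
    and i: "i \<in> {1..N}" and j: "j \<in> {1..N}"
    and s: "real n * taubar - taubar \<le> s" and t: "real n * taubar - taubar \<le> t"
  shows "norm (x i s - x j t) \<le> diamD N taubar x n"
proof -
  define D where "D = diamD N taubar x n"
  define w where "w = x i s - x j t"
  have forward: "v \<bullet> x k r \<le> M"
    if "\<And>k r. k \<in> {1..N} \<Longrightarrow> r \<in> delay_window taubar n \<Longrightarrow> v \<bullet> x k r \<le> M"
      and "k \<in> {1..N}" "real n * taubar - taubar \<le> r" for v M k r
  proof (rule dHK_halfspace_forward_invariant[OF \<open>0 \<le> taubar\<close> _ psi_nonneg sol that])
    show "\<And>t. 0 \<le> t \<Longrightarrow> 0 \<le> tau t \<and> tau t \<le> taubar"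
      by (fact tau)
  qed
  have in_window: "norm (x k r - x k' r') \<le> D"
    if "k \<in> {1..N}" "k' \<in> {1..N}" "r \<in> delay_window taubar n" "r' \<in> delay_window taubar n"
    for k k' r r'
    unfolding D_def
    by (rule norm_le_diamD[OF \<open>0 \<le> taubar\<close> dHK_solution_continuous[OF sol] that])
  have window_bound: "w \<bullet> x k r - w \<bullet> x k' r' \<le> norm w * D"
    if "k \<in> {1..N}" "k' \<in> {1..N}" "r \<in> delay_window taubar n" "r' \<in> delay_window taubar n"
    for k k' r r'
  proof -
    have "w \<bullet> (x k r - x k' r') \<le> norm w * norm (x k r - x k' r')"
      by (rule norm_cauchy_schwarz)
    also have "\<dots> \<le> norm w * D"
      by (rule mult_left_mono[OF in_window[OF that]]) simp
    finally show ?thesis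
      by (simp add: inner_diff_right)
  qed
  have "(-w) \<bullet> x j t \<le> norm w * D - w \<bullet> x k r"
    if "k \<in> {1..N}" "r \<in> delay_window taubar n" for k r
  proof (rule forward[OF _ j t])
    show "(-w) \<bullet> x k' r' \<le> norm w * D - w \<bullet> x k r"
      if "k' \<in> {1..N}" "r' \<in> delay_window taubar n" for k' r'
      using window_bound[OF \<open>k \<in> {1..N}\<close> that(1) \<open>r \<in> delay_window taubar n\<close> that(2)]
      by simp
  qed
  then have "w \<bullet> x i s \<le> w \<bullet> x j t + norm w * D"
    by (intro forward[OF _ i s]) (simp add: algebra_simps)
  then have "norm w * norm w \<le> norm w * D"
    using inner_diff_right[of w "x i s" "x j t"]
    by (simp add: w_def[symmetric] dot_square_norm power2_eq_square)
  moreover have "0 \<le> D"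
    using in_window[OF i i, of "real n * taubar" "real n * taubar"] \<open>0 \<le> taubar\<close> by simp
  ultimately show ?thesis
    unfolding w_def[symmetric] D_def[symmetric]
    by (cases "w = 0") (simp_all add: mult_le_cancel_left_pos)
qed

theorem lemma2p2:
  fixes N :: nat and taubar :: real and tau :: "real \<Rightarrow> real"
    and psi :: "'a::euclidean_space \<Rightarrow> 'a \<Rightarrow> real"
    and x0 x :: "nat \<Rightarrow> real \<Rightarrow> 'a"
  assumes "N \<ge> 2" and "taubar > 0"
    and "continuous_on {0..} tau" and "\<And>t. t \<ge> 0 \<Longrightarrow> 0 \<le> tau t \<and> tau t \<le> taubar"
    and "continuous_on UNIV (\<lambda>p. psi (fst p) (snd p))"
    and "bounded (range (\<lambda>p. psi (fst p) (snd p)))"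
    and "\<And>u v. psi u v > 0"
    and "\<And>i. i \<in> {1..N} \<Longrightarrow> continuous_on {-taubar..0} (x0 i)"
    and "dHK_solution N taubar tau psi x0 x"
  shows "(\<forall>n::nat. \<forall>i\<in>{1..N}. \<forall>j\<in>{1..N}. \<forall>s t.
            s \<ge> real n * taubar - taubar \<longrightarrow> t \<ge> real n * taubar - taubar \<longrightarrow>
            norm (x i s - x j t) \<le> diamD N taubar x n)
       \<and> (\<forall>i\<in>{1..N}. \<forall>j\<in>{1..N}. \<forall>s t. s \<ge> - taubar \<longrightarrow> t \<ge> - taubar \<longrightarrow>
            norm (x i s - x j t) \<le> diamD N taubar x 0)
       \<and> (\<forall>n::nat. diamD N taubar x (n + 1) \<le> diamD N taubar x n)"
proof -
  have "0 \<le> taubar"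
    using \<open>taubar > 0\<close> by simp
  have "\<And>u v. 0 \<le> psi u v"
    using \<open>\<And>u v. psi u v > 0\<close> less_imp_le by blast
  note dist = dHK_dist_le_diamD[OF \<open>0 \<le> taubar\<close>
      \<open>\<And>t. t \<ge> 0 \<Longrightarrow> 0 \<le> tau t \<and> tau t \<le> taubar\<close> this
      \<open>dHK_solution N taubar tau psi x0 x\<close>]
  have "diamD N taubar x (n + 1) \<le> diamD N taubar x n" for n
    using \<open>N \<ge> 2\<close> \<open>0 \<le> taubar\<close>
    by (intro diamD_le) (auto intro!: dist simp: algebra_simps)
  then show ?thesis
    using dist[of _ _ 0] dist by auto
qed

end
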